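(* Let $(\mathfrak{l},g_\rho^c)$ be as in the context, with $c\ge0$, $\rho>0$. With respect to the ordered basis $\mathcal{B}_n$: (1) If $n>1$, the mean curvature vector is $H=\frac{\mathrm{tr}(\mathrm{ad}(B_1^R))}{g_\rho^c(B_1^R,B_1^R)}B_1^R=(2n-2)\frac{\rho}{\rho+c}B_1^R$, and $$\mathrm{ad}(H)^s=(2n-2)\,\mathrm{diag}\Big(0,\tfrac{2\rho^2+4c\rho+c^2}{(\rho+c)(\rho+2c)},\tfrac{\rho}{\rho+c}\mathbb{1}_{2n-4},\mathcal{S}_4,\mathbb{O}_{2n-4},-\tfrac{c^2}{(\rho+c)(\rho+2c)}\Big)+(2n-2)\Big(-\tfrac{c}{2(\rho+c)(\rho+2c)}E_{2,4n-1}+\tfrac{2c(\rho+c)}{\rho+2c}E_{4n-1,2}\Big),$$ where $\mathcal{S}_4=\begin{pmatrix}0&0&-\frac{\rho}{\rho+2c}&0\\0&0&0&-\frac{\rho}{\rho+2c}\\-1&0&0&0\\0&-1&0&0\end{pmatrix}$. (2) If $n>1$, the symmetric endomorphism associated with the Killing form is $B=(2n+4)\frac{\rho}{\rho+c}E_{1,1}$. (3) If $n=1$, then $B=0=H$.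
   Context: Fix $n\ge1$, $\rho>0$, $c\ge0$. The real Lie algebra $\mathfrak{l}$ has basis $B_a^R,B_a^I$ ($a=1,\dots,n-1$; none if $n=1$), $e_k,f_k$ ($k=0,\dots,n-1$), $Z$, ordered as $\mathcal{B}_n=(e_0,f_0,Z)$ if $n=1$ and $\mathcal{B}_n=(B_1^R,B_1^I,\dots,B_{n-1}^R,B_{n-1}^I,e_0,f_0,e_1,f_1,\dots,e_{n-1},f_{n-1},Z)$ if $n>1$. Brackets (unlisted brackets of basis elements, up to antisymmetry, are zero): $[B_1^R,B_1^I]=2B_1^I$; for $a\in\{2,\dots,n-1\}$: $[B_1^R,B_a^R]=B_a^R$, $[B_1^R,B_a^I]=B_a^I$, $[B_a^R,B_a^I]=\tfrac12B_1^I$; $[e_0,f_0]=Z$, $[e_a,f_a]=-Z$ ($a\ge1$); $[B,Z]=0$. Mixed brackets after complex-bilinear extension, $E_k:=e_k-if_k$, $[B,\bar E_k]=\overline{[B,E_k]}$ for real $B$: for $a\ge2$, $[B_1^R,E_k]=-\delta_{k0}E_1-\delta_{k1}E_0$, $[B_a^R,E_k]=-\tfrac12(\delta_{k0}+\delta_{k1})E_a-\tfrac12\delta_{ka}(E_0-E_1)$, $[B_1^I,E_k]=-i(\delta_{k0}+\delta_{k1})(E_0-E_1)$, $[B_a^I,E_k]=\tfrac{i}{2}(\delta_{k0}+\delta_{k1})E_a-\tfrac{i}{2}\delta_{ka}(E_0-E_1)$. Inner product $g=g_\rho^c$: $g(B_1^R,B_1^R)=\frac{\rho+c}{\rho}$,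 $g(B_1^I,B_1^I)=\frac{(\rho+c)^3}{\rho^2(\rho+2c)}$, $g(B_a^R,B_a^R)=g(B_a^I,B_a^I)=\frac{\rho+c}{4\rho}$ ($a\ge2$), $g(e_0,e_0)=g(f_0,f_0)=\frac{\rho+2c}{4\rho^2}$, $g(e_a,e_a)=g(f_a,f_a)=\frac1{4\rho}$ ($a\ge1$), $g(Z,Z)=\frac{\rho+c}{4\rho^2(\rho+2c)}$, $g(B_1^I,Z)=-\frac{c(\rho+c)}{2\rho^2(\rho+2c)}$, other distinct basis pairs orthogonal. Let $\mathfrak{a}$ be the $g$-orthogonal complement of the nilradical of $\mathfrak{l}$ (for $n>1$, $\mathfrak{a}=\mathrm{span}\{B_1^R\}$; for $n=1$, $\mathfrak{a}=0$). The mean curvature vector $H\in\mathfrak{a}$ is defined by $g(H,A)=\mathrm{tr}(\mathrm{ad}A)$ for all $A\in\mathfrak{a}$; $\mathrm{ad}(H)^s=\frac12(\mathrm{ad}H+\mathrm{ad}H^* )$ with $^*$ the $g$-adjoint; $B$ is the $g$-symmetric endomorphism with $g(BX,Y)=\mathrm{tr}(\mathrm{ad}X\circ\mathrm{ad}Y)$. $E_{i,j}$ is the matrix unit; a matrix $M$ represents $T$ if $Tv_j=\sum_iM_{ij}v_i$. *)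

theory Defs
  imports Complex_Main
begin

text \<open>Vectors of l are coordinate functions nat => real with respect to the ordered
  basis B_n, indexed 1,...,4n-1 (coordinates outside this range are ignored by
  all operations below).  Matrices are functions nat => nat => real, only the
  entries with indices in 1,...,4n-1 being relevant.\<close>

datatype lb = BR nat | BI nat | Ee nat | Ff nat | Zz
  (* BR a = B_a^R, BI a = B_a^I, Ee k = e_k, Ff k = f_k, Zz = Z *)

definition labels :: "nat \<Rightarrow> lb set" where
  "labels n = {BR a | a. 1 \<le> a \<and> a \<le> n - 1} \<union> {BI a | a. 1 \<le> a \<and> a \<le> n - 1}
     \<union> {Ee k | k. k < n} \<union> {Ff k | k. k < n} \<union> {Zz}"

fun idx :: "nat \<Rightarrow> lb \<Rightarrow> nat" where
  "idx n (BR a) = 2 * a - 1"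
| "idx n (BI a) = 2 * a"
| "idx n (Ee k) = 2 * (n - 1) + 2 * k + 1"
| "idx n (Ff k) = 2 * (n - 1) + 2 * k + 2"
| "idx n Zz = 4 * n - 1"

definition dimL :: "nat \<Rightarrow> nat" where "dimL n = 4 * n - 1"

definition uvec :: "nat \<Rightarrow> nat \<Rightarrow> real" where
  "uvec i = (\<lambda>j. if j = i then 1 else 0)"

definition zvec :: "nat \<Rightarrow> real" where "zvec = (\<lambda>j. 0)"

definition sc :: "real \<Rightarrow> (nat \<Rightarrow> real) \<Rightarrow> nat \<Rightarrow> real" where
  "sc t v = (\<lambda>j. t * v j)"

definition kd :: "nat \<Rightarrow> nat \<Rightarrow> complex" where
  "kd x y = (if x = y then 1 else 0)"

text \<open>Coefficient of E_{k'} in [B, E_k], where E_k = e_k - i f_k (complex-bilinear extension).\<close>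
definition mixE :: "lb \<Rightarrow> nat \<Rightarrow> nat \<Rightarrow> complex" where
  "mixE B k k' = (case B of
      BR a \<Rightarrow> (if a = 1 then - (kd k 0 * kd k' 1 + kd k 1 * kd k' 0)
               else - (1/2) * (kd k 0 + kd k 1) * kd k' a - (1/2) * kd k a * (kd k' 0 - kd k' 1))
    | BI a \<Rightarrow> (if a = 1 then - \<i> * (kd k 0 + kd k 1) * (kd k' 0 - kd k' 1)
               else (\<i>/2) * (kd k 0 + kd k 1) * kd k' a - (\<i>/2) * kd k a * (kd k' 0 - kd k' 1))
    | _ \<Rightarrow> 0)"

text \<open>Real coordinates of [B, e_k] = Re [B,E_k] and [B, f_k] = - Im [B,E_k]:
  if [B,E_k] = sum_k' c_k' E_k', then [B,e_k] = sum (Re c) e_k' + (Im c) f_k'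
  and [B,f_k] = sum - (Im c) e_k' + (Re c) f_k'.\<close>
definition mix_e :: "nat \<Rightarrow> lb \<Rightarrow> nat \<Rightarrow> nat \<Rightarrow> real" where
  "mix_e n B k = (\<lambda>i. \<Sum>k'<n. Re (mixE B k k') * uvec (idx n (Ee k')) i
                              + Im (mixE B k k') * uvec (idx n (Ff k')) i)"

definition mix_f :: "nat \<Rightarrow> lb \<Rightarrow> nat \<Rightarrow> nat \<Rightarrow> real" where
  "mix_f n B k = (\<lambda>i. \<Sum>k'<n. - Im (mixE B k k') * uvec (idx n (Ee k')) i
                              + Re (mixE B k k') * uvec (idx n (Ff k')) i)"

text \<open>The listed brackets [x,y] of basis elements (one orientation only).\<close>
fun bb0 :: "nat \<Rightarrow> lb \<Rightarrow> lb \<Rightarrow> nat \<Rightarrow> real" where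
  "bb0 n (BR a) (BI b) =
     (if a = 1 \<and> b = 1 then sc 2 (uvec (idx n (BI 1)))
      else if a = 1 then uvec (idx n (BI b))
      else if a = b then sc (1/2) (uvec (idx n (BI 1)))
      else zvec)"
| "bb0 n (BR a) (BR b) = (if a = 1 \<and> 2 \<le> b then uvec (idx n (BR b)) else zvec)"
| "bb0 n (Ee a) (Ff b) =
     (if a = b then (if a = 0 then uvec (idx n Zz) else sc (-1) (uvec (idx n Zz))) else zvec)"
| "bb0 n (BR a) (Ee k) = mix_e n (BR a) k"
| "bb0 n (BR a) (Ff k) = mix_f n (BR a) k"
| "bb0 n (BI a) (Ee k) = mix_e n (BI a) k"
| "bb0 n (BI a) (Ff k) = mix_f n (BI a) k"
| "bb0 n _ _ = zvec"

definition bb :: "nat \<Rightarrow> lb \<Rightarrow> lb \<Rightarrow> nat \<Rightarrow> real" where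
  "bb n x y = (\<lambda>i. bb0 n x y i - bb0 n y x i)"

definition brk :: "nat \<Rightarrow> (nat \<Rightarrow> real) \<Rightarrow> (nat \<Rightarrow> real) \<Rightarrow> nat \<Rightarrow> real" where
  "brk n x y = (\<lambda>i. \<Sum>l\<in>labels n. \<Sum>m\<in>labels n. x (idx n l) * y (idx n m) * bb n l m i)"

definition admat :: "nat \<Rightarrow> (nat \<Rightarrow> real) \<Rightarrow> nat \<Rightarrow> nat \<Rightarrow> real" where
  "admat n x = (\<lambda>i j. brk n x (uvec j) i)"

definition mtr :: "nat \<Rightarrow> (nat \<Rightarrow> nat \<Rightarrow> real) \<Rightarrow> real" where
  "mtr n M = (\<Sum>i=1..dimL n. M i i)"

definition mmul :: "nat \<Rightarrow> (nat \<Rightarrow> nat \<Rightarrow> real) \<Rightarrow> (nat \<Rightarrow> nat \<Rightarrow> real) \<Rightarrow> nat \<Rightarrow> nat \<Rightarrow> real" where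
  "mmul n M N = (\<lambda>i j. \<Sum>k=1..dimL n. M i k * N k j)"

definition matvec :: "nat \<Rightarrow> (nat \<Rightarrow> nat \<Rightarrow> real) \<Rightarrow> (nat \<Rightarrow> real) \<Rightarrow> nat \<Rightarrow> real" where
  "matvec n M x = (\<lambda>i. \<Sum>j=1..dimL n. M i j * x j)"

definition Emat :: "nat \<Rightarrow> nat \<Rightarrow> nat \<Rightarrow> nat \<Rightarrow> real" where
  "Emat a b = (\<lambda>i j. if i = a \<and> j = b then 1 else 0)"

definition gl :: "real \<Rightarrow> real \<Rightarrow> lb \<Rightarrow> lb \<Rightarrow> real" where
  "gl \<rho> c l m =
    (if l = m then
       (case l of
          BR a \<Rightarrow> (if a = 1 then (\<rho> + c) / \<rho> else (\<rho> + c) / (4 * \<rho>))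
        | BI a \<Rightarrow> (if a = 1 then (\<rho> + c) ^ 3 / (\<rho>^2 * (\<rho> + 2 * c)) else (\<rho> + c) / (4 * \<rho>))
        | Ee k \<Rightarrow> (if k = 0 then (\<rho> + 2 * c) / (4 * \<rho>^2) else 1 / (4 * \<rho>))
        | Ff k \<Rightarrow> (if k = 0 then (\<rho> + 2 * c) / (4 * \<rho>^2) else 1 / (4 * \<rho>))
        | Zz \<Rightarrow> (\<rho> + c) / (4 * \<rho>^2 * (\<rho> + 2 * c)))
     else if (l = BI 1 \<and> m = Zz) \<or> (l = Zz \<and> m = BI 1)
       then - (c * (\<rho> + c)) / (2 * \<rho>^2 * (\<rho> + 2 * c))
     else 0)"

definition gip :: "nat \<Rightarrow> real \<Rightarrow> real \<Rightarrow> (nat \<Rightarrow> real) \<Rightarrow> (nat \<Rightarrow> real) \<Rightarrow> real" where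
  "gip n \<rho> c x y = (\<Sum>l\<in>labels n. \<Sum>m\<in>labels n. x (idx n l) * y (idx n m) * gl \<rho> c l m)"

text \<open>The subspace a (g-orthogonal complement of the nilradical), as given in the context:
  span{B_1^R} if n > 1 and 0 if n = 1.\<close>
definition aset :: "nat \<Rightarrow> (nat \<Rightarrow> real) set" where
  "aset n = (if 1 < n then {sc t (uvec (idx n (BR 1))) | t. True} else {zvec})"

definition is_meancurv :: "nat \<Rightarrow> real \<Rightarrow> real \<Rightarrow> (nat \<Rightarrow> real) \<Rightarrow> bool" where
  "is_meancurv n \<rho> c H \<longleftrightarrow> H \<in> aset n \<and> (\<forall>A\<in>aset n. gip n \<rho> c H A = mtr n (admat n A))"

definition S4 :: "real \<Rightarrow> real \<Rightarrow> nat \<Rightarrow> nat \<Rightarrow> real" where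
  "S4 \<rho> c i j =
     (if (i, j) = (1, 3) \<or> (i, j) = (2, 4) then - \<rho> / (\<rho> + 2 * c)
      else if (i, j) = (3, 1) \<or> (i, j) = (4, 2) then -1
      else 0)"

text \<open>The block-diagonal matrix
  diag(0, (2rho^2+4c rho+c^2)/((rho+c)(rho+2c)), rho/(rho+c) 1_{2n-4}, S_4, O_{2n-4}, -c^2/((rho+c)(rho+2c))).\<close>
definition blockdiag :: "nat \<Rightarrow> real \<Rightarrow> real \<Rightarrow> nat \<Rightarrow> nat \<Rightarrow> real" where
  "blockdiag n \<rho> c i j =
     (if 2 * n - 1 \<le> i \<and> i \<le> 2 * n + 2 \<and> 2 * n - 1 \<le> j \<and> j \<le> 2 * n + 2
        then S4 \<rho> c (i - (2 * n - 2)) (j - (2 * n - 2))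
      else if i \<noteq> j then 0
      else if i = 2 then (2 * \<rho>^2 + 4 * c * \<rho> + c^2) / ((\<rho> + c) * (\<rho> + 2 * c))
      else if 3 \<le> i \<and> i \<le> 2 * n - 2 then \<rho> / (\<rho> + c)
      else if i = 4 * n - 1 then - (c^2) / ((\<rho> + c) * (\<rho> + 2 * c))
      else 0)"

definition adHs_claim :: "nat \<Rightarrow> real \<Rightarrow> real \<Rightarrow> nat \<Rightarrow> nat \<Rightarrow> real" where
  "adHs_claim n \<rho> c = (\<lambda>i j.
     (2 * real n - 2) * blockdiag n \<rho> c i j
     + (2 * real n - 2) * (- c / (2 * (\<rho> + c) * (\<rho> + 2 * c)) * Emat 2 (4 * n - 1) i j
                           + 2 * c * (\<rho> + c) / (\<rho> + 2 * c) * Emat (4 * n - 1) 2 i j))"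

end

theory Submission
  imports Defs
begin

text \<open>The claimed
  ad(H)^s is confirmed by checking that 2 ad(H)^s - ad(H) is the g-adjoint of ad(H), and the
  Killing form equals (2n+4) x_1 y_1 because tr(ad u o ad v) vanishes on every pair of basis
  vectors other than (B_1^R, B_1^R).  Each claim is thus a finite family of identities between
  structure constants and entries of the Gram matrix, indexed by pairs of basis vectors.  Basis
  vectors with index a >= 2 enter uniformly in a, so splitting the basis into seven low vectors
  and four families indexed by a in {2..<n} reduces every identity to finitely many rational
  identities in rho and c.\<close>

lemma mem_labels [simp]:
  "BR a \<in> labels n \<longleftrightarrow> 1 \<le> a \<and> a < n"
  "BI a \<in> labels n \<longleftrightarrow> 1 \<le> a \<and> a < n"
  "Ee k \<in> labels n \<longleftrightarrow> k < n"
  "Ff k \<in> labels n \<longleftrightarrow> k < n"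
  "Zz \<in> labels n"
  by (auto simp: labels_def)

lemma labels_eq:
  "labels n = BR ` {1..n-1} \<union> BI ` {1..n-1} \<union> Ee ` {..<n} \<union> Ff ` {..<n} \<union> {Zz}"
  by (auto simp: labels_def)

lemma finite_labels [simp]: "finite (labels n)"
  by (simp add: labels_eq)

lemma sum_labels:
  "(\<Sum>l\<in>labels n. f l) = (\<Sum>a=1..n-1. f (BR a)) + (\<Sum>a=1..n-1. f (BI a))
     + (\<Sum>k<n. f (Ee k)) + (\<Sum>k<n. f (Ff k)) + f Zz"
proof -
  have d1: "(BR ` {1..n-1} \<union> BI ` {1..n-1} \<union> Ee ` {..<n} \<union> Ff ` {..<n}) \<inter> {Zz} = {}"
    and d2: "(BR ` {1..n-1} \<union> BI ` {1..n-1} \<union> Ee ` {..<n}) \<inter> Ff ` {..<n} = {}"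
    and d3: "(BR ` {1..n-1} \<union> BI ` {1..n-1}) \<inter> Ee ` {..<n} = {}"
    and d4: "BR ` {1..n-1} \<inter> BI ` {1..n-1} = {}"
    by auto
  show ?thesis
    unfolding labels_eq
    by (simp only: sum.union_disjoint[OF _ _ d1] sum.union_disjoint[OF _ _ d2]
        sum.union_disjoint[OF _ _ d3] sum.union_disjoint[OF _ _ d4] finite_UnI finite_imageI
        finite_atLeastAtMost finite_lessThan finite.intros)
      (simp add: sum.reindex inj_on_def)
qed

lemma sum_labels_ge2:
  assumes "2 \<le> n"
  shows "(\<Sum>l\<in>labels n. f l) = f (BR 1) + f (BI 1) + f (Ee 0) + f (Ff 0) + f (Ee 1) + f (Ff 1) + f Zz
    + (\<Sum>a\<in>{2..<n}. f (BR a) + f (BI a) + f (Ee a) + f (Ff a))"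
proof -
  have "{1..n-1} = insert 1 {2..<n}" "{..<n} = insert 0 (insert 1 {2..<n})"
    using assms by auto
  then show ?thesis
    unfolding sum_labels by (simp add: sum.distrib add_ac)
qed

lemma labels_1: "labels 1 = {Ee 0, Ff 0, Zz}"
  by (auto simp: labels_def)

lemma card_labels:
  assumes "1 \<le> n"
  shows "card (labels n) = dimL n"
proof -
  have "card (labels n) = (\<Sum>l\<in>labels n. 1::nat)"
    by simp
  also have "\<dots> = dimL n"
    unfolding sum_labels using assms by (simp add: dimL_def)
  finally show ?thesis .
qed

lemma idx_injective:
  assumes "l \<in> labels n" "m \<in> labels n" "idx n l = idx n m"
  shows "l = m"
  using assms by (cases l; cases m) (auto, presburger+)

lemma inj_on_idx: "inj_on (idx n) (labels n)"
  using idx_injective by (auto intro: inj_onI)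

lemma idx_eq_iff [simp]:
  "l \<in> labels n \<Longrightarrow> m \<in> labels n \<Longrightarrow> idx n l = idx n m \<longleftrightarrow> l = m"
  using inj_on_idx by (auto dest: inj_onD)

lemma bij_betw_idx:
  assumes "1 \<le> n"
  shows "bij_betw (idx n) (labels n) {1..dimL n}"
proof -
  have "idx n ` labels n \<subseteq> {1..dimL n}"
    using assms by (auto simp: labels_def dimL_def)
  moreover have "card (idx n ` labels n) = card {1..dimL n}"
    using card_labels[OF assms] by (simp add: card_image[OF inj_on_idx])
  ultimately have "idx n ` labels n = {1..dimL n}"
    by (simp add: card_subset_eq)
  then show ?thesis
    using inj_on_idx by (simp add: bij_betw_def)
qed

lemma sum_dimL_eq_sum_labels:
  "1 \<le> n \<Longrightarrow> (\<Sum>i=1..dimL n. f i) = (\<Sum>l\<in>labels n. f (idx n l))"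
  using sum.reindex_bij_betw[OF bij_betw_idx, of n f] by simp

lemma labels_ge2_cases:
  assumes "2 \<le> n" "l \<in> labels n"
  obtains "l = BR 1" | "l = BI 1" | "l = Ee 0" | "l = Ff 0" | "l = Ee 1" | "l = Ff 1" | "l = Zz"
    | a where "Suc (Suc a) < n"
        "l = BR (Suc (Suc a)) \<or> l = BI (Suc (Suc a)) \<or> l = Ee (Suc (Suc a)) \<or> l = Ff (Suc (Suc a))"
proof -
  have small: "a = 0 \<or> a = 1 \<or> (\<exists>b. a = Suc (Suc b))" for a :: nat
    by presburger
  show thesis
  proof (cases l)
    case (BR a)
    with assms small[of a] show thesis using that(1,8) by auto
  next
    case (BI a)
    with assms small[of a] show thesis using that(2,8) by auto
  next
    case (Ee a)
    with assms small[of a] show thesis using that(3,5,8) by auto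
  next
    case (Ff a)
    with assms small[of a] show thesis using that(4,6,8) by auto
  qed (rule that(7))
qed

definition mixE_support :: "lb \<Rightarrow> nat list" where
  "mixE_support B = (case B of BR a \<Rightarrow> if a = 1 then [0, 1] else [0, 1, a]
                              | BI a \<Rightarrow> if a = 1 then [0, 1] else [0, 1, a] | _ \<Rightarrow> [])"

lemma mixE_eq_0_outside_support:
  assumes "B \<in> labels n" "k' \<notin> set (mixE_support B)"
  shows "mixE B k k' = 0"
  using assms by (cases B) (auto simp: mixE_def kd_def mixE_support_def split: if_splits)

lemma distinct_mixE_support: "B \<in> labels n \<Longrightarrow> distinct (mixE_support B)"
  by (cases B) (auto simp: mixE_support_def)

lemma mixE_support_subset: "B \<in> labels n \<Longrightarrow> set (mixE_support B) \<subseteq> {..<n}"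
  by (cases B) (auto simp: mixE_support_def)

lemma sum_lessThan_eq_sum_mixE_support:
  assumes "B \<in> labels n" and "\<And>k'. k' \<notin> set (mixE_support B) \<Longrightarrow> g k' = (0::real)"
  shows "(\<Sum>k'<n. g k') = (\<Sum>k'\<leftarrow>mixE_support B. g k')"
proof -
  have "(\<Sum>k'\<leftarrow>mixE_support B. g k') = sum g (set (mixE_support B))"
    by (simp add: sum_list_distinct_conv_sum_set distinct_mixE_support[OF assms(1)])
  also have "\<dots> = (\<Sum>k'<n. g k')"
    by (rule sum.mono_neutral_left) (use mixE_support_subset[OF assms(1)] assms(2) in auto)
  finally show ?thesis by simp
qed

text \<open>Bracket values are represented sparsely, as lists of (basis label, coefficient) pairs, so
  that sums over the basis collapse to list sums over the few nonzero terms.\<close>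

definition lincomb :: "nat \<Rightarrow> (lb \<times> real) list \<Rightarrow> nat \<Rightarrow> real" where
  "lincomb n xs = (\<lambda>i. \<Sum>(t, c)\<leftarrow>xs. c * uvec (idx n t) i)"

lemma lincomb_Nil [simp]: "lincomb n [] = zvec"
  by (simp add: lincomb_def zvec_def)

lemma lincomb_Cons: "lincomb n ((t, c) # xs) = (\<lambda>i. c * uvec (idx n t) i + lincomb n xs i)"
  by (simp add: lincomb_def)

lemma lincomb_append: "lincomb n (xs @ ys) = (\<lambda>i. lincomb n xs i + lincomb n ys i)"
  by (simp add: lincomb_def)

lemma lincomb_map_uminus: "lincomb n (map (apsnd uminus) xs) = (\<lambda>i. - lincomb n xs i)"
  unfolding lincomb_def by (induction xs) (auto simp: fun_eq_iff)

definition coeff :: "(lb \<times> real) list \<Rightarrow> lb \<Rightarrow> real" where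
  "coeff xs p = (\<Sum>(t, c)\<leftarrow>xs. if t = p then c else 0)"

lemma coeff_simps [simp]:
  "coeff [] p = 0"
  "coeff ((t, c) # xs) p = (if t = p then c else 0) + coeff xs p"
  "coeff (xs @ ys) p = coeff xs p + coeff ys p"
  by (auto simp: coeff_def)

lemma lincomb_idx:
  assumes "fst ` set xs \<subseteq> labels n" "p \<in> labels n"
  shows "lincomb n xs (idx n p) = coeff xs p"
  using assms by (induction xs) (auto simp: lincomb_Cons uvec_def zvec_def)

lemma sum_coeff_mult:
  "(\<Sum>p\<in>labels n. coeff xs p * F p) = (\<Sum>(t, c)\<leftarrow>xs. c * (if t \<in> labels n then F t else 0))"
proof (induction xs)
  case (Cons x xs)
  obtain t c where x: "x = (t, c)" by (cases x)
  have "(\<Sum>p\<in>labels n. coeff (x # xs) p * F p)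
      = (\<Sum>p\<in>labels n. if t = p then c * F p else 0) + (\<Sum>p\<in>labels n. coeff xs p * F p)"
    by (simp add: x distrib_right sum.distrib if_distrib[where f = "\<lambda>y. y * F _"] cong: if_cong)
  then show ?case
    using Cons by (simp add: x sum.delta)
qed simp

definition mix_e_terms :: "lb \<Rightarrow> nat \<Rightarrow> (lb \<times> real) list" where
  "mix_e_terms B k = concat (map (\<lambda>k'. [(Ee k', Re (mixE B k k')), (Ff k', Im (mixE B k k'))])
     (mixE_support B))"

definition mix_f_terms :: "lb \<Rightarrow> nat \<Rightarrow> (lb \<times> real) list" where
  "mix_f_terms B k = concat (map (\<lambda>k'. [(Ee k', - Im (mixE B k k')), (Ff k', Re (mixE B k k'))])
     (mixE_support B))"

lemma sum_list_concat_pairs: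
  "(\<Sum>(t, c)\<leftarrow>concat (map (\<lambda>k. [(u k, v k), (w k, z k)]) xs). (h t c :: real))
   = (\<Sum>k\<leftarrow>xs. h (u k) (v k) + h (w k) (z k))"
  by (induction xs) auto

lemma mix_e_eq_lincomb:
  assumes "B \<in> labels n"
  shows "mix_e n B k = lincomb n (mix_e_terms B k)"
proof
  fix i
  have "mix_e n B k i = (\<Sum>k'\<leftarrow>mixE_support B. Re (mixE B k k') * uvec (idx n (Ee k')) i
                              + Im (mixE B k k') * uvec (idx n (Ff k')) i)"
    unfolding mix_e_def
    by (rule sum_lessThan_eq_sum_mixE_support[OF assms]) (simp add: mixE_eq_0_outside_support[OF assms])
  then show "mix_e n B k i = lincomb n (mix_e_terms B k) i"
    unfolding lincomb_def mix_e_terms_def sum_list_concat_pairs by simp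
qed

lemma mix_f_eq_lincomb:
  assumes "B \<in> labels n"
  shows "mix_f n B k = lincomb n (mix_f_terms B k)"
proof
  fix i
  have "mix_f n B k i = (\<Sum>k'\<leftarrow>mixE_support B. - Im (mixE B k k') * uvec (idx n (Ee k')) i
                              + Re (mixE B k k') * uvec (idx n (Ff k')) i)"
    unfolding mix_f_def
    by (rule sum_lessThan_eq_sum_mixE_support[OF assms]) (simp add: mixE_eq_0_outside_support[OF assms])
  then show "mix_f n B k i = lincomb n (mix_f_terms B k) i"
    unfolding lincomb_def mix_f_terms_def sum_list_concat_pairs by simp
qed

fun bracket0_terms :: "lb \<Rightarrow> lb \<Rightarrow> (lb \<times> real) list" where
  "bracket0_terms (BR a) (BI b) =
     (if a = 1 \<and> b = 1 then [(BI 1, 2)]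
      else if a = 1 then [(BI b, 1)]
      else if a = b then [(BI 1, 1/2)]
      else [])"
| "bracket0_terms (BR a) (BR b) = (if a = 1 \<and> 2 \<le> b then [(BR b, 1)] else [])"
| "bracket0_terms (Ee a) (Ff b) =
     (if a = b then (if a = 0 then [(Zz, 1)] else [(Zz, -1)]) else [])"
| "bracket0_terms (BR a) (Ee k) = mix_e_terms (BR a) k"
| "bracket0_terms (BR a) (Ff k) = mix_f_terms (BR a) k"
| "bracket0_terms (BI a) (Ee k) = mix_e_terms (BI a) k"
| "bracket0_terms (BI a) (Ff k) = mix_f_terms (BI a) k"
| "bracket0_terms _ _ = []"

lemma bb0_eq_lincomb:
  assumes "l \<in> labels n" "q \<in> labels n"
  shows "bb0 n l q = lincomb n (bracket0_terms l q)"
  using assms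
  by (cases l; cases q) (simp_all add: mix_e_eq_lincomb mix_f_eq_lincomb, auto simp: lincomb_Cons sc_def zvec_def)

definition bracket_terms :: "lb \<Rightarrow> lb \<Rightarrow> (lb \<times> real) list" where
  "bracket_terms l q = bracket0_terms l q @ map (apsnd uminus) (bracket0_terms q l)"

lemma bb_eq_lincomb:
  assumes "l \<in> labels n" "q \<in> labels n"
  shows "bb n l q = lincomb n (bracket_terms l q)"
  unfolding bb_def bracket_terms_def lincomb_append lincomb_map_uminus
    bb0_eq_lincomb[OF assms] bb0_eq_lincomb[OF assms(2,1)]
  by simp

lemma bracket_terms_in_labels:
  assumes "l \<in> labels n" "q \<in> labels n"
  shows "fst ` set (bracket_terms l q) \<subseteq> labels n"
  using assms
  by (cases l; cases q) (auto simp: bracket_terms_def mix_e_terms_def mix_f_terms_def mixE_support_def split: if_splits)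

definition strc :: "lb \<Rightarrow> lb \<Rightarrow> lb \<Rightarrow> real" where
  "strc l q p = coeff (bracket_terms l q) p"

lemma bb_idx_eq_strc:
  assumes "l \<in> labels n" "q \<in> labels n" "p \<in> labels n"
  shows "bb n l q (idx n p) = strc l q p"
  unfolding strc_def bb_eq_lincomb[OF assms(1,2)]
  using lincomb_idx[OF bracket_terms_in_labels[OF assms(1,2)] assms(3)] .

lemmas strc_simps = strc_def bracket_terms_def mix_e_terms_def mix_f_terms_def mixE_support_def
  mixE_def kd_def if_distrib[where f = coeff] if_distribR[where f = "coeff xs" for xs]
  if_distrib[where f = sum_list] if_distrib[where f = "map g" for g]

lemma uvec_idx:
  "l \<in> labels n \<Longrightarrow> m \<in> labels n \<Longrightarrow> uvec (idx n l) (idx n m) = (if m = l then 1 else 0)"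
  by (auto simp: uvec_def)

lemma sum_uvec_idx_mult:
  assumes "l0 \<in> labels n"
  shows "(\<Sum>l\<in>labels n. uvec (idx n l0) (idx n l) * f l) = f l0"
  using assms by (simp add: uvec_idx if_distrib[where f = "\<lambda>y. y * f _"] sum.delta' cong: if_cong)

lemma admat_idx:
  assumes "p \<in> labels n" "q \<in> labels n"
  shows "admat n x (idx n p) (idx n q) = (\<Sum>l\<in>labels n. x (idx n l) * strc l q p)"
proof -
  have "admat n x (idx n p) (idx n q)
      = (\<Sum>l\<in>labels n. x (idx n l) * (\<Sum>m\<in>labels n. uvec (idx n q) (idx n m) * bb n l m (idx n p)))"
    by (simp add: admat_def brk_def sum_distrib_left mult_ac)
  then show ?thesis
    using assms by (simp add: sum_uvec_idx_mult bb_idx_eq_strc)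
qed

lemma admat_uvec_idx:
  assumes "l0 \<in> labels n" "p \<in> labels n" "q \<in> labels n"
  shows "admat n (uvec (idx n l0)) (idx n p) (idx n q) = strc l0 q p"
  using assms by (simp add: admat_idx sum_uvec_idx_mult)

lemma admat_sc: "admat n (sc s x) = (\<lambda>i j. s * admat n x i j)"
  unfolding admat_def brk_def sc_def by (simp add: sum_distrib_left mult_ac)

lemma admat_zvec: "admat n zvec = (\<lambda>i j. 0)"
  unfolding admat_def brk_def zvec_def by simp

lemma mtr_scale: "mtr n (\<lambda>i j. s * M i j) = s * mtr n M"
  unfolding mtr_def by (simp add: sum_distrib_left)

lemma gip_sc_left: "gip n \<rho> c (sc t x) y = t * gip n \<rho> c x y"
  unfolding gip_def sc_def by (simp add: sum_distrib_left mult_ac)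

lemma gip_sc_right: "gip n \<rho> c x (sc t y) = t * gip n \<rho> c x y"
  unfolding gip_def sc_def by (simp add: sum_distrib_left mult_ac)

lemma gip_zvec: "gip n \<rho> c zvec y = 0"
  unfolding gip_def zvec_def by simp

lemma gip_uvec_idx_left:
  assumes "l0 \<in> labels n"
  shows "gip n \<rho> c (uvec (idx n l0)) y = (\<Sum>m\<in>labels n. y (idx n m) * gl \<rho> c l0 m)"
proof -
  have "gip n \<rho> c (uvec (idx n l0)) y
     = (\<Sum>l\<in>labels n. uvec (idx n l0) (idx n l) * (\<Sum>m\<in>labels n. y (idx n m) * gl \<rho> c l m))"
    unfolding gip_def by (simp add: sum_distrib_left mult_ac)
  then show ?thesis
    using assms by (simp add: sum_uvec_idx_mult)
qed

lemma matvec_idx: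
  "1 \<le> n \<Longrightarrow> matvec n M x (idx n l) = (\<Sum>q\<in>labels n. M (idx n l) (idx n q) * x (idx n q))"
  unfolding matvec_def by (rule sum_dimL_eq_sum_labels)

lemma gip_matvec_adjointI:
  assumes n: "1 \<le> n"
    and coeffs: "\<And>q m. q \<in> labels n \<Longrightarrow> m \<in> labels n \<Longrightarrow>
      (\<Sum>l\<in>labels n. M (idx n l) (idx n q) * gl \<rho> c l m) = (\<Sum>l\<in>labels n. N (idx n l) (idx n m) * gl \<rho> c q l)"
  shows "gip n \<rho> c (matvec n M x) y = gip n \<rho> c x (matvec n N y)"
proof -
  let ?L = "labels n"
  have "gip n \<rho> c (matvec n M x) y
      = (\<Sum>l\<in>?L. \<Sum>m\<in>?L. \<Sum>q\<in>?L. x (idx n q) * y (idx n m) * (M (idx n l) (idx n q) * gl \<rho> c l m))"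
    unfolding gip_def matvec_idx[OF n] by (simp add: sum_distrib_right sum_distrib_left mult_ac)
  also have "\<dots> = (\<Sum>q\<in>?L. \<Sum>m\<in>?L. \<Sum>l\<in>?L. x (idx n q) * y (idx n m) * (M (idx n l) (idx n q) * gl \<rho> c l m))"
    by (subst sum.swap, subst (2) sum.swap, subst sum.swap) (rule refl)
  also have "\<dots> = (\<Sum>q\<in>?L. \<Sum>m\<in>?L. \<Sum>l\<in>?L. x (idx n q) * y (idx n m) * (N (idx n l) (idx n m) * gl \<rho> c q l))"
    by (simp add: coeffs flip: sum_distrib_left)
  also have "\<dots> = (\<Sum>q\<in>?L. \<Sum>l\<in>?L. \<Sum>m\<in>?L. x (idx n q) * y (idx n m) * (N (idx n l) (idx n m) * gl \<rho> c q l))"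
    by (rule sum.cong[OF refl], rule sum.swap)
  also have "\<dots> = gip n \<rho> c x (matvec n N y)"
    unfolding gip_def matvec_idx[OF n] by (simp add: sum_distrib_right sum_distrib_left mult_ac)
  finally show ?thesis .
qed

lemma trace_ad_BR1:
  assumes "2 \<le> n"
  shows "mtr n (admat n (uvec (idx n (BR 1)))) = 2 * real n - 2"
proof -
  have "mtr n (admat n (uvec (idx n (BR 1)))) = (\<Sum>p\<in>labels n. strc (BR 1) p p)"
    unfolding mtr_def sum_dimL_eq_sum_labels[OF order_trans[OF one_le_numeral assms]]
    by (rule sum.cong[OF refl]) (use assms admat_uvec_idx[of "BR 1" n] in simp)
  also have "\<dots> = 2 * real n - 2"
    unfolding sum_labels_ge2[OF assms] using assms by (simp add: strc_simps of_nat_diff)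
  finally show ?thesis .
qed

lemma gip_uvec_BR1_left:
  assumes "2 \<le> n"
  shows "gip n \<rho> c (uvec (idx n (BR 1))) y = y 1 * ((\<rho> + c) / \<rho>)"
proof -
  have "gip n \<rho> c (uvec (idx n (BR 1))) y = (\<Sum>m\<in>labels n. y (idx n m) * gl \<rho> c (BR 1) m)"
    by (rule gip_uvec_idx_left) (use assms in simp)
  also have "\<dots> = (\<Sum>m\<in>labels n. if m = BR 1 then y (idx n m) * ((\<rho> + c) / \<rho>) else 0)"
    by (rule sum.cong) (auto simp: gl_def)
  also have "\<dots> = y 1 * ((\<rho> + c) / \<rho>)"
    by (simp only: sum.delta[OF finite_labels]) (use assms in simp)
  finally show ?thesis .
qed

lemma gip_BR1_BR1:
  assumes "2 \<le> n"
  shows "gip n \<rho> c (uvec (idx n (BR 1))) (uvec (idx n (BR 1))) = (\<rho> + c) / \<rho>"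
  by (simp only: gip_uvec_BR1_left[OF assms]) (simp add: uvec_def)

lemma meancurv_coefficient:
  assumes n: "2 \<le> n" and \<rho>: "\<rho> > 0" and c: "c \<ge> 0"
  shows "mtr n (admat n (uvec (idx n (BR 1)))) / gip n \<rho> c (uvec (idx n (BR 1))) (uvec (idx n (BR 1)))
    = (2 * real n - 2) * (\<rho> / (\<rho> + c))"
  unfolding gip_BR1_BR1[OF n] trace_ad_BR1[OF n] using \<rho> c by (simp add: field_simps)

lemma is_meancurv_iff_ge2:
  assumes n: "2 \<le> n" and \<rho>: "\<rho> > 0" and c: "c \<ge> 0"
  shows "is_meancurv n \<rho> c H \<longleftrightarrow>
     H = sc (mtr n (admat n (uvec (idx n (BR 1)))) / gip n \<rho> c (uvec (idx n (BR 1))) (uvec (idx n (BR 1))))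
            (uvec (idx n (BR 1)))"
proof -
  define u where "u = uvec (idx n (BR 1))"
  define T where "T = mtr n (admat n u)"
  define G where "G = gip n \<rho> c u u"
  have G: "G \<noteq> 0"
    unfolding G_def u_def gip_BR1_BR1[OF n] using \<rho> c by simp
  have a: "aset n = range (\<lambda>t. sc t u)" using n by (auto simp: aset_def u_def)
  have gip_u: "gip n \<rho> c (sc t u) (sc s u) = t * s * G" for t s
    by (simp add: gip_sc_left gip_sc_right G_def)
  have trace_u: "mtr n (admat n (sc s u)) = s * T" for s
    by (simp add: admat_sc mtr_scale T_def)
  have "is_meancurv n \<rho> c H \<longleftrightarrow> (\<exists>t. H = sc t u \<and> (\<forall>s. t * s * G = s * T))"
    unfolding is_meancurv_def a by (auto simp: gip_u trace_u)
  also have "\<dots> \<longleftrightarrow> H = sc (T / G) u"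
    using G by (auto simp: field_simps dest: spec[of _ 1])
  finally show ?thesis by (simp add: T_def G_def u_def)
qed

lemma is_meancurv_1_iff: "is_meancurv 1 \<rho> c H \<longleftrightarrow> H = zvec"
  by (auto simp: is_meancurv_def aset_def gip_zvec admat_zvec mtr_def)

lemma sum_swap_blocks:
  "(\<Sum>p\<in>A. \<Sum>q\<in>B. \<Sum>l\<in>C. \<Sum>m\<in>D. F p q l m) = (\<Sum>l\<in>C. \<Sum>m\<in>D. \<Sum>p\<in>A. \<Sum>q\<in>B. F p q l m)"
proof -
  have "(\<Sum>p\<in>A. \<Sum>q\<in>B. \<Sum>l\<in>C. \<Sum>m\<in>D. F p q l m) = (\<Sum>p\<in>A. \<Sum>l\<in>C. \<Sum>q\<in>B. \<Sum>m\<in>D. F p q l m)"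
    by (rule sum.cong[OF refl], rule sum.swap)
  also have "\<dots> = (\<Sum>l\<in>C. \<Sum>p\<in>A. \<Sum>q\<in>B. \<Sum>m\<in>D. F p q l m)"
    by (rule sum.swap)
  also have "\<dots> = (\<Sum>l\<in>C. \<Sum>p\<in>A. \<Sum>m\<in>D. \<Sum>q\<in>B. F p q l m)"
    by (rule sum.cong[OF refl], rule sum.cong[OF refl], rule sum.swap)
  also have "\<dots> = (\<Sum>l\<in>C. \<Sum>m\<in>D. \<Sum>p\<in>A. \<Sum>q\<in>B. F p q l m)"
    by (rule sum.cong[OF refl], rule sum.swap)
  finally show ?thesis .
qed

definition killing_coeff :: "nat \<Rightarrow> lb \<Rightarrow> lb \<Rightarrow> real" where
  "killing_coeff n l m = (\<Sum>p\<in>labels n. \<Sum>q\<in>labels n. strc l q p * strc m p q)"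

lemma trace_ad_ad:
  assumes "1 \<le> n"
  shows "mtr n (mmul n (admat n x) (admat n y))
     = (\<Sum>l\<in>labels n. \<Sum>m\<in>labels n. x (idx n l) * y (idx n m) * killing_coeff n l m)"
proof -
  let ?L = "labels n"
  have "mtr n (mmul n (admat n x) (admat n y))
      = (\<Sum>p\<in>?L. \<Sum>q\<in>?L. admat n x (idx n p) (idx n q) * admat n y (idx n q) (idx n p))"
    unfolding mtr_def mmul_def sum_dimL_eq_sum_labels[OF assms] ..
  also have "\<dots> = (\<Sum>p\<in>?L. \<Sum>q\<in>?L.
       (\<Sum>l\<in>?L. x (idx n l) * strc l q p) * (\<Sum>m\<in>?L. y (idx n m) * strc m p q))"
    by (simp add: admat_idx)
  also have "\<dots> = (\<Sum>p\<in>?L. \<Sum>q\<in>?L. \<Sum>l\<in>?L. \<Sum>m\<in>?L.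
        x (idx n l) * y (idx n m) * (strc l q p * strc m p q))"
    by (simp only: sum_product) (simp add: mult_ac)
  also have "\<dots> = (\<Sum>l\<in>?L. \<Sum>m\<in>?L. \<Sum>p\<in>?L. \<Sum>q\<in>?L.
        x (idx n l) * y (idx n m) * (strc l q p * strc m p q))"
    by (rule sum_swap_blocks)
  finally show ?thesis
    by (simp add: killing_coeff_def sum_distrib_left)
qed

lemma killing_coeff_eq_sum_terms:
  "killing_coeff n l m
     = (\<Sum>q\<in>labels n. \<Sum>(t, c)\<leftarrow>bracket_terms l q. c * (if t \<in> labels n then strc m t q else 0))"
  unfolding killing_coeff_def strc_def[of l] sum.swap[of _ "labels n"] sum_coeff_mult ..

lemma killing_coeff_ge2:
  assumes n: "2 \<le> n" and l: "l \<in> labels n" and m: "m \<in> labels n"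
  shows "killing_coeff n l m = (if l = BR 1 \<and> m = BR 1 then 2 * real n + 4 else 0)"
proof -
  have n': "0 < n" "Suc 0 < n" using n by auto
  show ?thesis
    apply (rule labels_ge2_cases[OF n l]; rule labels_ge2_cases[OF n m]; (elim disjE)?)
    apply (simp_all add: killing_coeff_eq_sum_terms sum_labels_ge2[OF n] strc_simps of_nat_diff n n'
        cong: if_cong)
    done
qed

lemma killing_coeff_1: "l \<in> labels 1 \<Longrightarrow> m \<in> labels 1 \<Longrightarrow> killing_coeff 1 l m = 0"
  unfolding labels_1 by (auto simp: killing_coeff_eq_sum_terms labels_1[simplified] strc_simps)

lemma sum_sum_if_both_eq:
  assumes "finite A" "a \<in> A"
  shows "(\<Sum>l\<in>A. \<Sum>m\<in>A. if l = a \<and> m = a then f l m else 0) = f a a"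
proof -
  have "(\<Sum>m\<in>A. if l = a \<and> m = a then f l m else 0) = (if l = a then f l a else 0)" for l
    using assms by (auto simp: sum.delta')
  then show ?thesis
    using assms by (simp add: sum.delta')
qed

lemma trace_ad_ad_ge2:
  assumes n: "2 \<le> n"
  shows "mtr n (mmul n (admat n x) (admat n y)) = (2 * real n + 4) * x 1 * y 1"
proof -
  have "mtr n (mmul n (admat n x) (admat n y))
     = (\<Sum>l\<in>labels n. \<Sum>m\<in>labels n.
          if l = BR 1 \<and> m = BR 1 then x (idx n l) * y (idx n m) * (2 * real n + 4) else 0)"
    unfolding trace_ad_ad[OF order_trans[OF one_le_numeral n]]
    by (intro sum.cong refl) (simp add: killing_coeff_ge2[OF n])
  also have "\<dots> = (2 * real n + 4) * x 1 * y 1"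
    using n by (subst sum_sum_if_both_eq) auto
  finally show ?thesis .
qed

lemma trace_ad_ad_1: "mtr 1 (mmul 1 (admat 1 x) (admat 1 y)) = 0"
  unfolding trace_ad_ad[OF order_refl] using killing_coeff_1 by (intro sum.neutral ballI) simp

lemma gip_matvec_scaled_E11:
  assumes n: "2 \<le> n"
  shows "gip n \<rho> c (matvec n (\<lambda>i j. K * Emat 1 1 i j) x) y = K * x 1 * y 1 * ((\<rho> + c) / \<rho>)"
proof -
  have "matvec n (\<lambda>i j. K * Emat 1 1 i j) x i = (\<Sum>j\<in>{1..dimL n}. if j = 1 then K * x 1 * uvec 1 i else 0)"
    for i
    unfolding matvec_def by (intro sum.cong refl) (simp add: Emat_def uvec_def)
  moreover have "1 \<le> dimL n"
    using n by (simp add: dimL_def)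
  ultimately have "matvec n (\<lambda>i j. K * Emat 1 1 i j) x = sc (K * x 1) (uvec (idx n (BR 1)))"
    by (simp add: fun_eq_iff sc_def)
  then show ?thesis
    by (simp only: gip_sc_left gip_uvec_BR1_left[OF n])
qed

lemma killing_form_ge2:
  assumes n: "2 \<le> n" and \<rho>: "\<rho> > 0" and c: "c \<ge> 0"
  shows "gip n \<rho> c (matvec n (\<lambda>i j. (2 * real n + 4) * (\<rho> / (\<rho> + c)) * Emat 1 1 i j) x) y
    = mtr n (mmul n (admat n x) (admat n y))"
  unfolding gip_matvec_scaled_E11[OF n] trace_ad_ad_ge2[OF n] using \<rho> c by (simp add: divide_simps)

lemma killing_form_1: "gip 1 \<rho> c (matvec 1 (\<lambda>i j. 0) x) y = mtr 1 (mmul 1 (admat 1 x) (admat 1 y))"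
proof -
  have "matvec 1 (\<lambda>i j. 0) x = zvec"
    by (simp add: matvec_def zvec_def)
  then show ?thesis
    using trace_ad_ad_1 by (simp add: gip_zvec)
qed

definition adHs_diag :: "real \<Rightarrow> real \<Rightarrow> lb \<Rightarrow> real" where
  "adHs_diag \<rho> c l = (case l of
       BR a \<Rightarrow> if a = 1 then 0 else \<rho> / (\<rho> + c)
     | BI a \<Rightarrow> if a = 1 then (2 * \<rho>^2 + 4 * c * \<rho> + c^2) / ((\<rho> + c) * (\<rho> + 2 * c)) else \<rho> / (\<rho> + c)
     | Zz \<Rightarrow> - (c^2) / ((\<rho> + c) * (\<rho> + 2 * c))
     | _ \<Rightarrow> 0)"

definition adHs_offdiag :: "real \<Rightarrow> real \<Rightarrow> lb \<Rightarrow> lb \<Rightarrow> real" where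
  "adHs_offdiag \<rho> c l m =
     (if (l, m) = (Ee 0, Ee 1) \<or> (l, m) = (Ff 0, Ff 1) then - \<rho> / (\<rho> + 2 * c)
      else if (l, m) = (Ee 1, Ee 0) \<or> (l, m) = (Ff 1, Ff 0) then -1
      else if (l, m) = (BI 1, Zz) then - c / (2 * (\<rho> + c) * (\<rho> + 2 * c))
      else if (l, m) = (Zz, BI 1) then 2 * c * (\<rho> + c) / (\<rho> + 2 * c)
      else 0)"

definition adHs_label :: "nat \<Rightarrow> real \<Rightarrow> real \<Rightarrow> lb \<Rightarrow> lb \<Rightarrow> real" where
  "adHs_label n \<rho> c l m =
     (2 * real n - 2) * ((if l = m then adHs_diag \<rho> c l else 0) + adHs_offdiag \<rho> c l m)"

lemma adHs_claim_idx:
  assumes n: "2 \<le> n" and l: "l \<in> labels n" and m: "m \<in> labels n"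
  shows "adHs_claim n \<rho> c (idx n l) (idx n m) = adHs_label n \<rho> c l m"
proof -
  obtain N where N: "n = Suc (Suc N)" using n by (metis add_2_eq_Suc le_Suc_ex)
  have parity: "2 * a \<noteq> Suc (2 * b)" for a b :: nat by presburger
  show ?thesis
    apply (rule labels_ge2_cases[OF n l]; rule labels_ge2_cases[OF n m]; (elim disjE)?)
    apply (simp_all add: adHs_claim_def blockdiag_def S4_def Emat_def adHs_label_def adHs_diag_def
        adHs_offdiag_def N parity parity[symmetric])
    done
qed

lemma gl_eq:
  "gl \<rho> c (BR a) m = (if m = BR a then (if a = 1 then (\<rho> + c) / \<rho> else (\<rho> + c) / (4 * \<rho>)) else 0)"
  "gl \<rho> c (BI a) m = (if m = BI a then (if a = 1 then (\<rho> + c) ^ 3 / (\<rho>^2 * (\<rho> + 2 * c)) else (\<rho> + c) / (4 * \<rho>))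
      else if a = 1 \<and> m = Zz then - (c * (\<rho> + c)) / (2 * \<rho>^2 * (\<rho> + 2 * c)) else 0)"
  "gl \<rho> c (Ee k) m = (if m = Ee k then (if k = 0 then (\<rho> + 2 * c) / (4 * \<rho>^2) else 1 / (4 * \<rho>)) else 0)"
  "gl \<rho> c (Ff k) m = (if m = Ff k then (if k = 0 then (\<rho> + 2 * c) / (4 * \<rho>^2) else 1 / (4 * \<rho>)) else 0)"
  "gl \<rho> c Zz m = (if m = Zz then (\<rho> + c) / (4 * \<rho>^2 * (\<rho> + 2 * c))
      else if m = BI 1 then - (c * (\<rho> + c)) / (2 * \<rho>^2 * (\<rho> + 2 * c)) else 0)"
  by (auto simp: gl_def)

text \<open>Entrywise ad(H)^T G + G ad(H) = 2 G S, i.e. S is the g-symmetric part of ad(H).\<close>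

lemma adHs_label_gram_identity:
  assumes n: "2 \<le> n" and q: "q \<in> labels n" and m: "m \<in> labels n" and \<rho>: "\<rho> > 0" and c: "c \<ge> 0"
  defines "h \<equiv> (2 * real n - 2) * (\<rho> / (\<rho> + c))"
  shows "h * (\<Sum>l\<in>labels n. strc (BR 1) q l * gl \<rho> c l m) + h * (\<Sum>l\<in>labels n. strc (BR 1) m l * gl \<rho> c q l)
       = 2 * (\<Sum>l\<in>labels n. adHs_label n \<rho> c l m * gl \<rho> c q l)"
proof -
  have pos: "\<rho> + c > 0" "\<rho> + 2 * c > 0" using \<rho> c by auto
  then have nz: "\<rho> + c \<noteq> 0" "\<rho> + 2 * c \<noteq> 0" "\<rho> \<noteq> 0" using \<rho> by auto
  have n': "0 < n" "Suc 0 < n" using n by auto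
  have mult_if_0: "x * (if P then y else 0) = (if P then x * y else 0)"
    "(if P then y else 0) * x = (if P then y * x else 0)" for x y :: real and P
    by simp_all
  show ?thesis
    unfolding h_def strc_def sum_coeff_mult sum_labels_ge2[OF n]
    apply (rule labels_ge2_cases[OF n q]; rule labels_ge2_cases[OF n m]; (elim disjE)?)
    apply (simp_all add: strc_simps gl_eq adHs_label_def adHs_diag_def adHs_offdiag_def n' nz mult_if_0)
    using \<rho> c apply (simp_all add: divide_simps pos)
    apply (simp_all add: algebra_simps power2_eq_square power3_eq_cube)
    done
qed

lemma gip_adjoint_adH:
  assumes n: "2 \<le> n" and \<rho>: "\<rho> > 0" and c: "c \<ge> 0"
  defines "H \<equiv> sc ((2 * real n - 2) * (\<rho> / (\<rho> + c))) (uvec (idx n (BR 1)))"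
  shows "gip n \<rho> c (matvec n (admat n H) x) y
       = gip n \<rho> c x (matvec n (\<lambda>i j. 2 * adHs_claim n \<rho> c i j - admat n H i j) y)"
proof (rule gip_matvec_adjointI)
  show "1 \<le> n" using n by simp
  fix q m assume q: "q \<in> labels n" and m: "m \<in> labels n"
  let ?h = "(2 * real n - 2) * (\<rho> / (\<rho> + c))"
  have adH: "admat n H (idx n l) (idx n p) = ?h * strc (BR 1) p l" if "l \<in> labels n" "p \<in> labels n" for l p
    using that n by (simp add: H_def admat_sc admat_uvec_idx del: idx.simps)
  have "(\<Sum>l\<in>labels n. (2 * adHs_claim n \<rho> c (idx n l) (idx n m) - admat n H (idx n l) (idx n m)) * gl \<rho> c q l)
      = 2 * (\<Sum>l\<in>labels n. adHs_label n \<rho> c l m * gl \<rho> c q l)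
        - ?h * (\<Sum>l\<in>labels n. strc (BR 1) m l * gl \<rho> c q l)"
    unfolding sum_distrib_left sum_subtractf[symmetric]
    by (rule sum.cong[OF refl]) (simp add: adHs_claim_idx[OF n _ m] adH[OF _ m] algebra_simps)
  moreover have "(\<Sum>l\<in>labels n. admat n H (idx n l) (idx n q) * gl \<rho> c l m)
      = ?h * (\<Sum>l\<in>labels n. strc (BR 1) q l * gl \<rho> c l m)"
    unfolding sum_distrib_left by (rule sum.cong[OF refl]) (simp add: adH[OF _ q])
  ultimately show "(\<Sum>l\<in>labels n. admat n H (idx n l) (idx n q) * gl \<rho> c l m)
      = (\<Sum>l\<in>labels n. (2 * adHs_claim n \<rho> c (idx n l) (idx n m) - admat n H (idx n l) (idx n m)) * gl \<rho> c q l)"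
    using adHs_label_gram_identity[OF n q m \<rho> c] by simp
qed

lemma adjoint_of_meancurv:
  assumes n: "2 \<le> n" and \<rho>: "\<rho> > 0" and c: "c \<ge> 0" and H: "is_meancurv n \<rho> c H"
  shows "\<exists>Ast. (\<forall>x y. gip n \<rho> c (matvec n (admat n H) x) y = gip n \<rho> c x (matvec n Ast y))
    \<and> (\<forall>i\<in>{1..dimL n}. \<forall>j\<in>{1..dimL n}. adHs_claim n \<rho> c i j = (admat n H i j + Ast i j) / 2)"
  \<comment> \<open>the adjoint is forced by the claimed symmetric part: ad(H)* = 2 ad(H)^s - ad(H)\<close>
proof (intro exI[of _ "\<lambda>i j. 2 * adHs_claim n \<rho> c i j - admat n H i j"] conjI allI ballI)
  have "H = sc ((2 * real n - 2) * (\<rho> / (\<rho> + c))) (uvec (idx n (BR 1)))"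
    using H is_meancurv_iff_ge2[OF n \<rho> c] meancurv_coefficient[OF n \<rho> c] by simp
  then show "gip n \<rho> c (matvec n (admat n H) x) y
      = gip n \<rho> c x (matvec n (\<lambda>i j. 2 * adHs_claim n \<rho> c i j - admat n H i j) y)" for x y
    using gip_adjoint_adH[OF n \<rho> c] by simp
qed simp

theorem lemma4p7:
  fixes n :: nat and \<rho> c :: real
  assumes "1 \<le> n" and "\<rho> > 0" and "c \<ge> 0"
  shows
    "(1 < n \<longrightarrow>
       mtr n (admat n (uvec (idx n (BR 1)))) / gip n \<rho> c (uvec (idx n (BR 1))) (uvec (idx n (BR 1)))
         = (2 * real n - 2) * (\<rho> / (\<rho> + c))
     \<and> (\<forall>H. is_meancurv n \<rho> c H \<longleftrightarrow>
             H = sc (mtr n (admat n (uvec (idx n (BR 1)))) / gip n \<rho> c (uvec (idx n (BR 1))) (uvec (idx n (BR 1))))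
                    (uvec (idx n (BR 1))))
     \<and> (\<forall>H. is_meancurv n \<rho> c H \<longrightarrow>
          (\<exists>Ast :: nat \<Rightarrow> nat \<Rightarrow> real.
             (\<forall>x y. gip n \<rho> c (matvec n (admat n H) x) y = gip n \<rho> c x (matvec n Ast y))
           \<and> (\<forall>i\<in>{1..dimL n}. \<forall>j\<in>{1..dimL n}.
                 adHs_claim n \<rho> c i j = (admat n H i j + Ast i j) / 2)))
     \<and> (\<forall>x y. gip n \<rho> c (matvec n (\<lambda>i j. (2 * real n + 4) * (\<rho> / (\<rho> + c)) * Emat 1 1 i j) x) y
               = mtr n (mmul n (admat n x) (admat n y))))
   \<and> (n = 1 \<longrightarrow>
       (\<forall>x y. gip n \<rho> c (matvec n (\<lambda>i j. 0) x) y = mtr n (mmul n (admat n x) (admat n y)))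
     \<and> (\<forall>H. is_meancurv n \<rho> c H \<longleftrightarrow> H = zvec))"
proof (cases "n = 1")
  case True
  then show ?thesis
    using killing_form_1 is_meancurv_1_iff by simp
next
  case False
  with assms have n: "2 \<le> n" and \<rho>: "\<rho> > 0" and c: "c \<ge> 0"
    by auto
  show ?thesis
    using False meancurv_coefficient[OF n \<rho> c] is_meancurv_iff_ge2[OF n \<rho> c]
      adjoint_of_meancurv[OF n \<rho> c] killing_form_ge2[OF n \<rho> c]
    by blast
qed

end
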